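(* Assume the total harvested energy is finite, so that problem (P) below has an optimal solution. Then there exists an optimal solution $\{p_{k,i},\delta_{k,i}\}$ of (P) that is a procrastinating policy, i.e. it satisfies $$p_{k,i}-\alpha_j\delta_{j,i}\ge 0\quad\text{for all } j,k\in\{1,2\},\ j\neq k,\ i=1,\dots,N.$$
   Context: Two-way channel setting. There are two nodes $T_1,T_2$ and $N$ time slots of unit length. The fixed parameters are channel power gains $h_1,h_2>0$, noise powers $\sigma_1^2,\sigma_2^2>0$, energy transfer efficiencies $\alpha_1,\alpha_2\in[0,1]$, and harvested energies $E_{k,i}\ge 0$ ($k=1,2$, $i=1,\dots,N$). A power policy is a collection $\{p_{k,i},\delta_{k,i}\}_{k=1,2;\,i=1,\dots,N}$. Here $p_{k,i}$ is the transmit power (energy) of $T_k$ in slot $i$, and $\delta_{k,i}$ is the energy sent by $T_k$ to the other node $T_j$ ($j\neq k$) in slot $i$, of which $T_j$ receives $\alpha_k\delta_{k,i}$. With infinite batteries the battery state is $$S_{k,i}=\sum_{n=1}^{i}\big(E_{k,n}-p_{k,n}+\alpha_j\delta_{j,n}-\delta_{k,n}\big),\qquad j\neq k.$$ Let $$C(p_1,p_2)=\tfrac12\log\!\Big(1+\tfrac{h_1p_1}{\sigma_2^2}\Big)+\tfrac12\log\!\Big(1+\tfrac{h_2p_2}{\sigma_1^2}\Big).$$ Problem (P) is to maximize $\sum_{i=1}^N C(p_{1,i},p_{2,i})$ over all power policies, subject to $S_{k,i}\ge 0$, $p_{k,i}\ge0$ and $\delta_{k,i}\ge 0$ for all $k=1,2$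 and $i=1,\dots,N$. *)

theory Defs
  imports Complex_Main
begin

text \<open>A policy is a pair of functions p, d :: nat => nat => real with p k i, d k i the
  transmit power and the transferred energy of node k in slot i.\<close>

definition other :: "nat \<Rightarrow> nat" where
  "other k = (if k = 1 then 2 else 1)"

definition battery ::
  "(nat \<Rightarrow> real) \<Rightarrow> (nat \<Rightarrow> nat \<Rightarrow> real) \<Rightarrow>
   (nat \<Rightarrow> nat \<Rightarrow> real) \<Rightarrow> (nat \<Rightarrow> nat \<Rightarrow> real) \<Rightarrow> nat \<Rightarrow> nat \<Rightarrow> real" where
  "battery alpha E p d k i =
     (\<Sum>n=1..i. E k n - p k n + alpha (other k) * d (other k) n - d k n)"

definition rate :: "real \<Rightarrow> real \<Rightarrow> real \<Rightarrow> real \<Rightarrow> real \<Rightarrow> real \<Rightarrow> real" where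
  "rate h1 h2 s1 s2 p1 p2 =
     (1/2) * ln (1 + h1 * p1 / s2) + (1/2) * ln (1 + h2 * p2 / s1)"

definition feasible ::
  "nat \<Rightarrow> (nat \<Rightarrow> real) \<Rightarrow> (nat \<Rightarrow> nat \<Rightarrow> real) \<Rightarrow>
   (nat \<Rightarrow> nat \<Rightarrow> real) \<Rightarrow> (nat \<Rightarrow> nat \<Rightarrow> real) \<Rightarrow> bool" where
  "feasible N alpha E p d \<longleftrightarrow>
     (\<forall>k\<in>{1,2}. \<forall>i\<in>{1..N}.
        battery alpha E p d k i \<ge> 0 \<and> p k i \<ge> 0 \<and> d k i \<ge> 0)"

definition objective ::
  "nat \<Rightarrow> real \<Rightarrow> real \<Rightarrow> real \<Rightarrow> real \<Rightarrow> (nat \<Rightarrow> nat \<Rightarrow> real) \<Rightarrow> real" where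
  "objective N h1 h2 s1 s2 p = (\<Sum>i=1..N. rate h1 h2 s1 s2 (p 1 i) (p 2 i))"

definition optimal ::
  "nat \<Rightarrow> real \<Rightarrow> real \<Rightarrow> real \<Rightarrow> real \<Rightarrow> (nat \<Rightarrow> real) \<Rightarrow> (nat \<Rightarrow> nat \<Rightarrow> real) \<Rightarrow>
   (nat \<Rightarrow> nat \<Rightarrow> real) \<Rightarrow> (nat \<Rightarrow> nat \<Rightarrow> real) \<Rightarrow> bool" where
  "optimal N h1 h2 s1 s2 alpha E p d \<longleftrightarrow>
     feasible N alpha E p d \<and>
     (\<forall>q e. feasible N alpha E q e \<longrightarrow>
        objective N h1 h2 s1 s2 q \<le> objective N h1 h2 s1 s2 p)"

definition procrastinating ::
  "nat \<Rightarrow> (nat \<Rightarrow> real) \<Rightarrow> (nat \<Rightarrow> nat \<Rightarrow> real) \<Rightarrow> (nat \<Rightarrow> nat \<Rightarrow> real) \<Rightarrow> bool" where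
  "procrastinating N alpha p d \<longleftrightarrow>
     (\<forall>k\<in>{1,2}. \<forall>j\<in>{1,2}. j \<noteq> k \<longrightarrow>
        (\<forall>i\<in>{1..N}. p k i - alpha j * d j i \<ge> 0))"

end

theory Submission
  imports Defs "HOL-Analysis.Analysis"
begin

text \<open>The objective depends on the powers only. For fixed powers \<open>p\<close>, choose among all
  feasible transfer schedules one minimising the potential
  \<open>\<Sum>k n. (N + 1 - n) * d k n\<close>; it exists by compactness. If such a minimiser had
  \<open>alpha j * d j i > p k i\<close>, then either node \<open>k\<close> also sends in slot \<open>i\<close>, and part of the two
  opposite transfers can be cancelled, or it does not, and the surplus is merely stored by \<open>k\<close>,
  so that part of \<open>d j i\<close> can be postponed to slot \<open>i + 1\<close>. Both moves keep the schedule
  feasible and strictly decrease the potential. Minimisers also send nothing when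
  \<open>alpha j = 0\<close> and at most \<open>B / alpha j\<close> otherwise, where the total harvested energy \<open>B\<close>
  bounds every power; so an optimal policy exists by compactness as well.\<close>

lemma compact_PiE_UNIV:
  fixes K :: "'a \<Rightarrow> ('b::topological_space) set"
  assumes "\<And>i. compact (K i)"
  shows "compact (PiE UNIV K)"
  using compactin_PiE[of "\<lambda>i. euclidean" UNIV K] assms
  by (simp add: euclidean_product_topology)

lemma continuous_on_coordinate2:
  fixes f :: "'x::topological_space \<Rightarrow> 'a \<Rightarrow> 'b \<Rightarrow> 'c::topological_space"
  assumes "continuous_on S f"
  shows "continuous_on S (\<lambda>x. f x k i)"
  using assms by (metis continuous_on_product_then_coordinatewise)

lemma other_in [simp]: "other k \<in> {1,2}"
  by (simp add: other_def)

lemma other_other [simp]: "k \<in> {1,2} \<Longrightarrow> other (other k) = k"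
  by (auto simp: other_def)

lemma other_neq [simp]: "k \<in> {1,2} \<Longrightarrow> other k \<noteq> k"
  by (auto simp: other_def)

definition policy_box :: "nat \<Rightarrow> real \<Rightarrow> (nat \<Rightarrow> nat \<Rightarrow> real) set" where
  "policy_box N M =
     PiE UNIV (\<lambda>k. PiE UNIV (\<lambda>i. if k \<in> {1,2} \<and> i \<in> {1..N} then {0..M} else {0}))"

definition restrict_policy :: "nat \<Rightarrow> (nat \<Rightarrow> nat \<Rightarrow> real) \<Rightarrow> nat \<Rightarrow> nat \<Rightarrow> real" where
  "restrict_policy N f = (\<lambda>k i. if k \<in> {1,2} \<and> i \<in> {1..N} then f k i else 0)"

lemma restrict_policy_apply [simp]:
  "k \<in> {1,2} \<Longrightarrow> i \<in> {1..N} \<Longrightarrow> restrict_policy N f k i = f k i"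
  by (simp add: restrict_policy_def)

lemma compact_policy_box: "compact (policy_box N M)"
  unfolding policy_box_def by (intro compact_PiE_UNIV) auto

lemma restrict_policy_in_policy_box:
  assumes "\<forall>k\<in>{1,2}. \<forall>i\<in>{1..N}. 0 \<le> f k i \<and> f k i \<le> M"
  shows "restrict_policy N f \<in> policy_box N M"
  using assms unfolding policy_box_def restrict_policy_def PiE_iff by auto

lemma battery_Suc:
  "battery alpha E p d k (Suc m) = battery alpha E p d k m +
     (E k (Suc m) - p k (Suc m) + alpha (other k) * d (other k) (Suc m) - d k (Suc m))"
  unfolding battery_def by (simp add: sum.nat_ivl_Suc')

lemma battery_cong:
  assumes "k \<in> {1,2}" "m \<le> N"
    and "\<forall>k\<in>{1,2}. \<forall>i\<in>{1..N}. p' k i = p k i \<and> d' k i = d k i"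
  shows "battery alpha E p' d' k m = battery alpha E p d k m"
  unfolding battery_def using assms by (intro sum.cong) (auto simp: other_def)

lemma feasibleD:
  assumes "feasible N alpha E p d" "k \<in> {1,2}" "i \<in> {1..N}"
  shows "0 \<le> battery alpha E p d k i" "0 \<le> p k i" "0 \<le> d k i"
  using assms by (auto simp: feasible_def)

lemma feasible_cong:
  assumes "\<forall>k\<in>{1,2}. \<forall>i\<in>{1..N}. p' k i = p k i \<and> d' k i = d k i"
  shows "feasible N alpha E p' d' = feasible N alpha E p d"
  unfolding feasible_def using battery_cong[OF _ _ assms] assms
  by (metis atLeastAtMost_iff)

lemma continuous_on_battery:
  assumes "\<And>k i. continuous_on S (\<lambda>x. P x k i)" "\<And>k i. continuous_on S (\<lambda>x. D x k i)"
  shows "continuous_on S (\<lambda>x. battery alpha E (P x) (D x) k m)"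
  unfolding battery_def by (intro continuous_intros assms)

lemma closed_feasible:
  assumes "\<And>k i. continuous_on UNIV (\<lambda>x. P x k i)" "\<And>k i. continuous_on UNIV (\<lambda>x. D x k i)"
  shows "closed {x. feasible N alpha E (P x) (D x)}"
  unfolding feasible_def Ball_def
  by (intro closed_Collect_all closed_Collect_imp open_Collect_const closed_Collect_conj
      closed_Collect_le closed_Collect_const continuous_intros continuous_on_battery assms)

definition total_energy :: "nat \<Rightarrow> (nat \<Rightarrow> nat \<Rightarrow> real) \<Rightarrow> real" where
  "total_energy N E = (\<Sum>k\<in>{1,2}. \<Sum>n=1..N. E k n)"

lemma feasible_power_le_total_energy:
  assumes al: "\<forall>k\<in>{1,2}. 0 \<le> alpha k \<and> alpha k \<le> 1"
    and f: "feasible N alpha E p d" and k: "k \<in> {1,2}" and i: "i \<in> {1..N}"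
  shows "p k i \<le> total_energy N E"
proof -
  note p_nonneg = feasibleD(2)[OF f]
  have loss_nonneg: "0 \<le> (\<Sum>n=1..N. (1 - alpha 1) * d 1 n + (1 - alpha 2) * d 2 n)"
    using feasibleD(3)[OF f] al by (intro sum_nonneg add_nonneg_nonneg mult_nonneg_nonneg) auto
  have "0 \<le> battery alpha E p d 1 N + battery alpha E p d 2 N"
    using feasibleD(1)[OF f, of _ N] i by (simp add: add_nonneg_nonneg)
  also have "\<dots> = (\<Sum>n=1..N. E 1 n + E 2 n) - (\<Sum>n=1..N. p 1 n + p 2 n)
      - (\<Sum>n=1..N. (1 - alpha 1) * d 1 n + (1 - alpha 2) * d 2 n)"
    unfolding battery_def other_def
    by (simp add: sum.distrib[symmetric] sum_subtractf[symmetric] algebra_simps)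
  finally have sum_p: "(\<Sum>n=1..N. p 1 n + p 2 n) \<le> (\<Sum>n=1..N. E 1 n + E 2 n)"
    using loss_nonneg by linarith
  have "p k i \<le> (\<Sum>n=1..N. p k n)"
    using i k p_nonneg by (intro member_le_sum) auto
  also have "\<dots> \<le> (\<Sum>n=1..N. p 1 n + p 2 n)"
    using k p_nonneg by (intro sum_mono) auto
  also have "\<dots> \<le> total_energy N E"
    using sum_p by (simp add: total_energy_def sum.distrib)
  finally show ?thesis .
qed

text \<open>Early transfers weigh more, so a minimiser sends as late and as little as feasibility
  allows.\<close>

definition transfer_potential :: "nat \<Rightarrow> (nat \<Rightarrow> nat \<Rightarrow> real) \<Rightarrow> real" where
  "transfer_potential N d = (\<Sum>k\<in>{1,2}. \<Sum>n=1..N. (real N + 1 - real n) * d k n)"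

lemma transfer_potential_cong:
  assumes "\<forall>k\<in>{1,2}. \<forall>i\<in>{1..N}. d' k i = d k i"
  shows "transfer_potential N d' = transfer_potential N d"
  unfolding transfer_potential_def using assms by (intro sum.cong refl) auto

lemma continuous_on_transfer_potential: "continuous_on S (transfer_potential N)"
  unfolding transfer_potential_def
  by (intro continuous_intros continuous_on_coordinate2[OF continuous_on_id])

lemma transfer_le_transfer_potential:
  assumes "\<forall>k\<in>{1,2}. \<forall>i\<in>{1..N}. 0 \<le> d k i" and "k \<in> {1,2}" "i \<in> {1..N}"
  shows "d k i \<le> transfer_potential N d"
proof -
  have terms_nonneg: "\<And>k n. k \<in> {1,2} \<Longrightarrow> n \<in> {1..N} \<Longrightarrow> 0 \<le> (real N + 1 - real n) * d k n"
    using assms(1) by (intro mult_nonneg_nonneg) auto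
  have "d k i \<le> (real N + 1 - real i) * d k i"
    using mult_right_mono[of 1 "real N + 1 - real i" "d k i"] assms by auto
  also have "\<dots> \<le> (\<Sum>n=1..N. (real N + 1 - real n) * d k n)"
    using assms(2,3) terms_nonneg by (intro member_le_sum) auto
  also have "\<dots> \<le> transfer_potential N d"
    unfolding transfer_potential_def using assms(2) terms_nonneg
    by (intro member_le_sum[where f = "\<lambda>k. \<Sum>n=1..N. (real N + 1 - real n) * d k n"] sum_nonneg) auto
  finally show ?thesis .
qed

text \<open>With \<open>b = 0\<close> this cancels opposite transfers in slot \<open>i\<close>; with \<open>a = b\<close>, \<open>c = 0\<close> it
  postpones a transfer of node \<open>j\<close> to slot \<open>i + 1\<close> (discarding it when \<open>i = N\<close>).\<close>

definition shift_transfer ::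
  "nat \<Rightarrow> nat \<Rightarrow> real \<Rightarrow> real \<Rightarrow> real \<Rightarrow> (nat \<Rightarrow> nat \<Rightarrow> real) \<Rightarrow> nat \<Rightarrow> nat \<Rightarrow> real" where
  "shift_transfer j i a b c d = (\<lambda>k n. d k n
      - (if k = j \<and> n = i then a else 0)
      + (if k = j \<and> n = Suc i then b else 0)
      - (if k = other j \<and> n = i then c else 0))"

lemma battery_change_transfers:
  "battery alpha E p d' k m = battery alpha E p d k m +
     (\<Sum>n=1..m. alpha (other k) * (d' (other k) n - d (other k) n) - (d' k n - d k n))"
  unfolding battery_def by (simp add: sum.distrib[symmetric] algebra_simps)

lemma battery_shift_transfer_sender:
  assumes "j \<in> {1,2}" "1 \<le> i"
  shows "battery alpha E p (shift_transfer j i a b c d) j m = battery alpha E p d j m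
     + (if i \<le> m then a - alpha (other j) * c else 0) - (if Suc i \<le> m then b else 0)"
proof -
  have "(\<Sum>n=1..m. alpha (other j) * (shift_transfer j i a b c d (other j) n - d (other j) n)
          - (shift_transfer j i a b c d j n - d j n))
      = (\<Sum>n=1..m. (if n = i then a - alpha (other j) * c else 0) - (if n = Suc i then b else 0))"
    using assms(1) by (intro sum.cong refl) (auto simp: shift_transfer_def other_def)
  also have "\<dots> = (if i \<le> m then a - alpha (other j) * c else 0) - (if Suc i \<le> m then b else 0)"
    using assms(2) by (simp add: sum_subtractf)
  finally show ?thesis by (simp add: battery_change_transfers[of _ _ _ "shift_transfer j i a b c d" j m d])
qed

lemma battery_shift_transfer_receiver:
  assumes "j \<in> {1,2}" "1 \<le> i"
  shows "battery alpha E p (shift_transfer j i a b c d) (other j) m = battery alpha E p d (other j) m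
     - (if i \<le> m then alpha j * a - c else 0) + (if Suc i \<le> m then alpha j * b else 0)"
proof -
  have "(\<Sum>n=1..m. alpha j * (shift_transfer j i a b c d j n - d j n)
          - (shift_transfer j i a b c d (other j) n - d (other j) n))
      = (\<Sum>n=1..m. (if n = Suc i then alpha j * b else 0) - (if n = i then alpha j * a - c else 0))"
    using assms(1) by (intro sum.cong refl) (auto simp: shift_transfer_def other_def algebra_simps)
  also have "\<dots> = (if Suc i \<le> m then alpha j * b else 0) - (if i \<le> m then alpha j * a - c else 0)"
    using assms(2) by (simp add: sum_subtractf)
  finally show ?thesis
    using assms(1) by (simp add: battery_change_transfers[of _ _ _ "shift_transfer j i a b c d" "other j" m d])
qed

lemma weighted_sum_shift_transfer:
  assumes "i \<in> {1..N}"
  shows "(\<Sum>n=1..N. (real N + 1 - real n) * shift_transfer j i a b c d k n)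
     = (\<Sum>n=1..N. (real N + 1 - real n) * d k n)
       - (if k = j then (real N + 1 - real i) * a else 0)
       + (if k = j \<and> Suc i \<le> N then (real N - real i) * b else 0)
       - (if k = other j then (real N + 1 - real i) * c else 0)"
  using assms
  by (simp add: shift_transfer_def right_diff_distrib distrib_left sum.distrib sum_subtractf
      if_distrib[of "\<lambda>x. _ * x"] sum.delta' conj_commute[of "_ = i"] conj_commute[of "_ = Suc i"] cong: if_cong)

lemma transfer_potential_shift_transfer:
  assumes "j \<in> {1,2}" "i \<in> {1..N}"
  shows "transfer_potential N (shift_transfer j i a b c d) = transfer_potential N d
     - (real N + 1 - real i) * (a + c) + (if Suc i \<le> N then (real N - real i) * b else 0)"
proof -
  have "j = 1 \<or> j = 2" using assms(1) by auto
  then show ?thesis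
    unfolding transfer_potential_def weighted_sum_shift_transfer[OF assms(2)]
    by (auto simp: other_def algebra_simps)
qed

lemma feasible_shift_transfer:
  assumes f: "feasible N alpha E p d" and j: "j \<in> {1,2}" and i: "i \<in> {1..N}"
    and "a \<le> d j i" "0 \<le> b" "c \<le> d (other j) i"
    and sender: "\<And>m. m \<in> {1..N} \<Longrightarrow> 0 \<le> battery alpha E p d j m
       + (if i \<le> m then a - alpha (other j) * c else 0) - (if Suc i \<le> m then b else 0)"
    and receiver: "\<And>m. m \<in> {1..N} \<Longrightarrow> 0 \<le> battery alpha E p d (other j) m
       - (if i \<le> m then alpha j * a - c else 0) + (if Suc i \<le> m then alpha j * b else 0)"
  shows "feasible N alpha E p (shift_transfer j i a b c d)"
  unfolding feasible_def
proof (intro ballI conjI)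
  fix k m :: nat assume k: "k \<in> {1,2}" and m: "m \<in> {1..N}"
  show "0 \<le> p k m" using feasibleD(2)[OF f k m] .
  show "0 \<le> shift_transfer j i a b c d k m"
    using feasibleD(3)[OF f k m] assms(4-6) other_neq[OF j] unfolding shift_transfer_def by (auto split: if_splits)
  have "k = j \<or> k = other j" using j k by (auto simp: other_def)
  then show "0 \<le> battery alpha E p (shift_transfer j i a b c d) k m"
    using battery_shift_transfer_sender[OF j] battery_shift_transfer_receiver[OF j] i
      sender[OF m] receiver[OF m] by auto
qed

definition potential_minimal ::
  "nat \<Rightarrow> (nat \<Rightarrow> real) \<Rightarrow> (nat \<Rightarrow> nat \<Rightarrow> real) \<Rightarrow>
   (nat \<Rightarrow> nat \<Rightarrow> real) \<Rightarrow> (nat \<Rightarrow> nat \<Rightarrow> real) \<Rightarrow> bool" where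
  "potential_minimal N alpha E p d \<longleftrightarrow>
     feasible N alpha E p d \<and>
     (\<forall>d'. feasible N alpha E p d' \<longrightarrow> transfer_potential N d \<le> transfer_potential N d')"

lemma potential_minimal_exists:
  assumes "feasible N alpha E p d"
  shows "\<exists>d'. potential_minimal N alpha E p d'"
proof -
  let ?Phi = "transfer_potential N"
  define S where "S = policy_box N (?Phi d) \<inter> {d'. feasible N alpha E p d'}"
  have restrict_in_S: "restrict_policy N d' \<in> S \<and> ?Phi (restrict_policy N d') = ?Phi d'"
    if fd': "feasible N alpha E p d'" and le: "?Phi d' \<le> ?Phi d" for d'
  proof -
    have nonneg: "\<forall>k\<in>{1,2}. \<forall>i\<in>{1..N}. 0 \<le> d' k i"
      using feasibleD(3)[OF fd'] by blast
    then have "\<forall>k\<in>{1,2}. \<forall>i\<in>{1..N}. 0 \<le> d' k i \<and> d' k i \<le> ?Phi d"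
      using transfer_le_transfer_potential[OF nonneg] le by fastforce
    then show ?thesis
      unfolding S_def using fd' restrict_policy_in_policy_box
      by (auto simp: restrict_policy_def intro: transfer_potential_cong feasible_cong[THEN iffD2])
  qed
  have "compact S"
    unfolding S_def
    by (intro compact_Int_closed compact_policy_box closed_feasible continuous_on_const
        continuous_on_coordinate2[OF continuous_on_id])
  moreover have "S \<noteq> {}" using restrict_in_S[OF assms] by auto
  ultimately obtain ds where ds: "ds \<in> S" "\<forall>y\<in>S. ?Phi ds \<le> ?Phi y"
    using continuous_attains_inf[OF _ _ continuous_on_transfer_potential] by blast
  have "?Phi ds \<le> ?Phi d'" if "feasible N alpha E p d'" for d'
  proof (cases "?Phi d' \<le> ?Phi d")
    case True
    then show ?thesis using ds(2) restrict_in_S[OF that] by metis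
  next
    case False
    then show ?thesis using ds(2) restrict_in_S[OF assms] by force
  qed
  then show ?thesis using ds(1) unfolding S_def potential_minimal_def by blast
qed

lemma potential_minimal_no_cancellation:
  assumes min: "potential_minimal N alpha E p d"
    and al: "\<forall>k\<in>{1,2}. 0 \<le> alpha k \<and> alpha k \<le> 1"
    and j: "j \<in> {1,2}" and i: "i \<in> {1..N}"
    and s: "0 < s" "s \<le> d j i" "alpha j * s \<le> d (other j) i"
  shows False
proof -
  have f: "feasible N alpha E p d" using min by (simp add: potential_minimal_def)
  have aj: "0 \<le> alpha j" "alpha j \<le> 1" and ak: "0 \<le> alpha (other j)" "alpha (other j) \<le> 1"
    using bspec[OF al j] bspec[OF al other_in] by auto
  have "alpha (other j) * (alpha j * s) \<le> 1 * s"
    using aj ak s by (intro mult_mono) (auto intro: mult_le_one)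
  then have "feasible N alpha E p (shift_transfer j i s 0 (alpha j * s) d)"
    using feasibleD(1)[OF f j] feasibleD(1)[OF f other_in]
    by (intro feasible_shift_transfer[OF f j i s(2) order_refl s(3)]) auto
  then have "transfer_potential N d \<le> transfer_potential N (shift_transfer j i s 0 (alpha j * s) d)"
    using min by (simp add: potential_minimal_def)
  also have "\<dots> = transfer_potential N d - (real N + 1 - real i) * (s + alpha j * s)"
    using transfer_potential_shift_transfer[OF j i] by simp
  finally have "(real N + 1 - real i) * (s + alpha j * s) \<le> 0" by simp
  moreover have "0 < (real N + 1 - real i) * (s + alpha j * s)"
    using i s aj by (intro mult_pos_pos add_pos_nonneg) auto
  ultimately show False by simp
qed

lemma potential_minimal_no_postponement:
  assumes min: "potential_minimal N alpha E p d"
    and Ef: "\<forall>k\<in>{1,2}. \<forall>i\<in>{1..N}. E k i \<ge> 0"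
    and j: "j \<in> {1,2}" and i: "i \<in> {1..N}"
    and idle: "d (other j) i = 0"
  shows "alpha j * d j i \<le> p (other j) i"
proof (rule ccontr)
  let ?k = "other j"
  have f: "feasible N alpha E p d" using min by (simp add: potential_minimal_def)
  assume "\<not> alpha j * d j i \<le> p ?k i"
  then have excess: "p ?k i < alpha j * d j i" by simp
  moreover have "0 \<le> p ?k i" "0 \<le> d j i"
    using feasibleD[OF f other_in i] feasibleD[OF f j i] by auto
  ultimately have apos: "0 < alpha j"
    by (metis less_le_trans mult_le_0_iff not_le)
  define x where "x = d j i - p ?k i / alpha j"
  have ax: "alpha j * x = alpha j * d j i - p ?k i"
    using apos by (simp add: x_def field_simps)
  have x_pos: "0 < x"
  proof -
    have "0 < alpha j * x" using ax excess by simp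
    then show ?thesis using apos by (simp add: zero_less_mult_iff)
  qed
  have x_le: "x \<le> d j i"
    using \<open>0 \<le> p ?k i\<close> apos by (simp add: x_def)
  obtain i' where i': "i = Suc i'" using i by (cases i) auto
  have "0 \<le> battery alpha E p d ?k i'"
  proof (cases "i' = 0")
    case True then show ?thesis by (simp add: battery_def)
  next
    case False then show ?thesis using feasibleD(1)[OF f other_in, of i'] i i' by auto
  qed
  moreover have "0 \<le> E ?k i" using bspec[OF Ef other_in] i by blast
  ultimately have receiver_battery: "alpha j * x \<le> battery alpha E p d ?k i"
    using battery_Suc[of alpha E p d ?k i'] i' idle ax j by simp
  have "feasible N alpha E p (shift_transfer j i x x 0 d)"
    using feasibleD(1)[OF f j] feasibleD(1)[OF f other_in] x_pos receiver_battery
      feasibleD(3)[OF f other_in i]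
    by (intro feasible_shift_transfer[OF f j i x_le]) (auto simp: not_less_eq_eq le_Suc_eq)
  then have "transfer_potential N d \<le> transfer_potential N (shift_transfer j i x x 0 d)"
    using min by (simp add: potential_minimal_def)
  also have "\<dots> = transfer_potential N d - (real N + 1 - real i) * x
      + (if Suc i \<le> N then (real N - real i) * x else 0)"
    using transfer_potential_shift_transfer[OF j i] by simp
  also have "\<dots> < transfer_potential N d"
  proof -
    have "(real N - real i) * x < (real N + 1 - real i) * x"
      using x_pos by (simp add: algebra_simps)
    moreover have "0 < (real N + 1 - real i) * x"
      using x_pos i by (intro mult_pos_pos) auto
    ultimately show ?thesis by auto
  qed
  finally show False by simp
qed

lemma potential_minimal_procrastinating:
  assumes min: "potential_minimal N alpha E p d"
    and al: "\<forall>k\<in>{1,2}. 0 \<le> alpha k \<and> alpha k \<le> 1"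
    and Ef: "\<forall>k\<in>{1,2}. \<forall>i\<in>{1..N}. E k i \<ge> 0"
    and j: "j \<in> {1,2}" and i: "i \<in> {1..N}"
  shows "alpha j * d j i \<le> p (other j) i \<and> (alpha j = 0 \<longrightarrow> d j i = 0)"
proof
  have f: "feasible N alpha E p d" using min by (simp add: potential_minimal_def)
  have dj: "0 \<le> d j i" and dk: "0 \<le> d (other j) i" and pk: "0 \<le> p (other j) i"
    using feasibleD[OF f j i] feasibleD[OF f other_in i] by auto
  show "alpha j = 0 \<longrightarrow> d j i = 0"
    using potential_minimal_no_cancellation[OF min al j i, of "d j i"] dj dk by force
  show "alpha j * d j i \<le> p (other j) i"
  proof (cases "d (other j) i = 0")
    case True
    then show ?thesis by (rule potential_minimal_no_postponement[OF min Ef j i])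
  next
    case False
    show ?thesis
    proof (rule ccontr)
      assume "\<not> alpha j * d j i \<le> p (other j) i"
      then have "0 < alpha j * d j i" using pk by simp
      then have apos: "0 < alpha j" and dpos: "0 < d j i"
        using bspec[OF al j] dj by (auto simp: zero_less_mult_iff)
      define s where "s = min (d j i) (d (other j) i / alpha j)"
      have "0 < s" using dpos dk False apos by (simp add: s_def)
      moreover have "s \<le> d j i" by (simp add: s_def)
      moreover have "alpha j * s \<le> d (other j) i"
        using apos by (simp add: s_def min_def field_simps)
      ultimately show False by (rule potential_minimal_no_cancellation[OF min al j i])
    qed
  qed
qed

lemma procrastinating_transfers_exist:
  assumes al: "\<forall>k\<in>{1,2}. 0 \<le> alpha k \<and> alpha k \<le> 1"
    and Ef: "\<forall>k\<in>{1,2}. \<forall>i\<in>{1..N}. E k i \<ge> 0"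
    and "feasible N alpha E p d"
  shows "\<exists>d'. feasible N alpha E p d' \<and>
    (\<forall>j\<in>{1,2}. \<forall>i\<in>{1..N}. alpha j * d' j i \<le> p (other j) i \<and> (alpha j = 0 \<longrightarrow> d' j i = 0))"
  using potential_minimal_exists[OF assms(3)] potential_minimal_procrastinating[OF _ al Ef]
  unfolding potential_minimal_def by blast

lemma feasible_policy_bounded_representative:
  assumes al: "\<forall>k\<in>{1,2}. 0 \<le> alpha k \<and> alpha k \<le> 1"
    and Ef: "\<forall>k\<in>{1,2}. \<forall>i\<in>{1..N}. E k i \<ge> 0"
    and f: "feasible N alpha E q e"
  shows "\<exists>q' e'. feasible N alpha E q' e' \<and> q' \<in> policy_box N (total_energy N E)
    \<and> e' \<in> policy_box N (total_energy N E / alpha 1 + total_energy N E / alpha 2)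
    \<and> (\<forall>k\<in>{1,2}. \<forall>i\<in>{1..N}. q' k i = q k i)"
proof -
  let ?B = "total_energy N E"
  obtain e where fe: "feasible N alpha E q e" and procr:
    "\<forall>j\<in>{1,2}. \<forall>i\<in>{1..N}. alpha j * e j i \<le> q (other j) i \<and> (alpha j = 0 \<longrightarrow> e j i = 0)"
    using procrastinating_transfers_exist[OF al Ef f] by blast
  have B_nonneg: "0 \<le> ?B" unfolding total_energy_def using Ef by (intro sum_nonneg) auto
  have q_bounds: "\<forall>k\<in>{1,2}. \<forall>i\<in>{1..N}. 0 \<le> q k i \<and> q k i \<le> ?B"
    using feasibleD(2)[OF fe] feasible_power_le_total_energy[OF al fe] by blast
  \<comment> \<open>When \<open>alpha j = 0\<close>, \<open>?B / alpha j = 0\<close>; then \<open>e j i = 0\<close> anyway.\<close>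
  have "e j i \<le> ?B / alpha 1 + ?B / alpha 2" if j: "j \<in> {1,2}" and i: "i \<in> {1..N}" for j i
  proof -
    have ratios_nonneg: "0 \<le> ?B / alpha 1" "0 \<le> ?B / alpha 2" using B_nonneg al by auto
    have "e j i \<le> ?B / alpha j"
    proof (cases "alpha j = 0")
      case True then show ?thesis using procr j i by auto
    next
      case False
      then have "0 < alpha j" using al j by force
      moreover have "alpha j * e j i \<le> ?B"
        using procr q_bounds j i by (meson order_trans other_in)
      ultimately show ?thesis by (simp add: field_simps mult.commute)
    qed
    then show ?thesis using ratios_nonneg j by auto
  qed
  then have e_bounds: "\<forall>k\<in>{1,2}. \<forall>i\<in>{1..N}. 0 \<le> e k i \<and> e k i \<le> ?B / alpha 1 + ?B / alpha 2"
    using feasibleD(3)[OF fe] by blast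
  have "feasible N alpha E (restrict_policy N q) (restrict_policy N e)"
    using fe by (subst feasible_cong) auto
  then show ?thesis
    using restrict_policy_in_policy_box[OF q_bounds] restrict_policy_in_policy_box[OF e_bounds]
    by (intro exI[of _ "restrict_policy N q"] exI[of _ "restrict_policy N e"]) auto
qed

lemma continuous_on_objective:
  assumes "h1 > 0" "h2 > 0" "s1 > 0" "s2 > 0"
    and cont: "\<And>k i. continuous_on S (\<lambda>x. P x k i)"
    and nonneg: "\<And>x k i. x \<in> S \<Longrightarrow> k \<in> {1,2} \<Longrightarrow> i \<in> {1..N} \<Longrightarrow> 0 \<le> P x k i"
  shows "continuous_on S (\<lambda>x. objective N h1 h2 s1 s2 (P x))"
  unfolding objective_def rate_def
proof (intro continuous_intros cont ballI)
  fix i x assume i: "i \<in> {1..N}" and x: "x \<in> S"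
  have "0 \<le> h1 * P x 1 i / s2" "0 \<le> h2 * P x 2 i / s1"
    using nonneg[OF x _ i] assms(1-4) by simp_all
  then show "1 + h1 * P x 1 i / s2 \<noteq> 0" "1 + h2 * P x 2 i / s1 \<noteq> 0" by linarith+
qed (use assms in auto)

lemma optimal_policy_exists:
  assumes "h1 > 0" "h2 > 0" "s1 > 0" "s2 > 0"
    and al: "\<forall>k\<in>{1,2}. 0 \<le> alpha k \<and> alpha k \<le> 1"
    and Ef: "\<forall>k\<in>{1,2}. \<forall>i\<in>{1..N}. E k i \<ge> 0"
  shows "\<exists>p d. optimal N h1 h2 s1 s2 alpha E p d"
proof -
  let ?B = "total_energy N E"
  let ?U = "objective N h1 h2 s1 s2"
  define Q where "Q = (policy_box N ?B \<times> policy_box N (?B / alpha 1 + ?B / alpha 2))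
    \<inter> {x. feasible N alpha E (fst x) (snd x)}"
  have "compact Q"
    unfolding Q_def
    using closed_feasible[OF continuous_on_coordinate2[OF continuous_on_fst[OF continuous_on_id]]
        continuous_on_coordinate2[OF continuous_on_snd[OF continuous_on_id]]]
    by (intro compact_Int_closed compact_Times compact_policy_box)
  moreover obtain q0 e0 where "feasible N alpha E q0 e0"
    "q0 \<in> policy_box N ?B" "e0 \<in> policy_box N (?B / alpha 1 + ?B / alpha 2)"
  proof -
    have "feasible N alpha E (\<lambda>_ _. 0) (\<lambda>_ _. 0)"
      unfolding feasible_def battery_def using Ef by (auto intro!: sum_nonneg)
    then show ?thesis using feasible_policy_bounded_representative[OF al Ef] that by blast
  qed
  then have "Q \<noteq> {}" unfolding Q_def by auto
  moreover have "continuous_on Q (\<lambda>x. ?U (fst x))"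
    using assms(1-4) continuous_on_coordinate2[OF continuous_on_fst[OF continuous_on_id]]
    by (intro continuous_on_objective) (auto simp: Q_def feasible_def)
  ultimately obtain x where x: "x \<in> Q" and x_max: "\<forall>y\<in>Q. ?U (fst y) \<le> ?U (fst x)"
    using continuous_attains_sup by blast
  have "?U q \<le> ?U (fst x)" if fq: "feasible N alpha E q e" for q e
  proof -
    obtain q' e' where "(q', e') \<in> Q" and agree: "\<forall>k\<in>{1,2}. \<forall>i\<in>{1..N}. q' k i = q k i"
      using feasible_policy_bounded_representative[OF al Ef fq] unfolding Q_def by auto
    then have "?U q' \<le> ?U (fst x)" using x_max by fastforce
    moreover have "?U q' = ?U q"
      using agree unfolding objective_def by (intro sum.cong) auto
    ultimately show ?thesis by simp
  qed
  moreover have "feasible N alpha E (fst x) (snd x)" using x by (simp add: Q_def)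
  ultimately have "optimal N h1 h2 s1 s2 alpha E (fst x) (snd x)"
    unfolding optimal_def by blast
  then show ?thesis by blast
qed

lemma procrastinatingI:
  assumes "\<forall>j\<in>{1,2}. \<forall>i\<in>{1..N}. alpha j * d j i \<le> p (other j) i"
  shows "procrastinating N alpha p d"
  unfolding procrastinating_def
proof (intro ballI impI)
  fix k j i :: nat assume "k \<in> {1,2}" "j \<in> {1,2}" "j \<noteq> k" "i \<in> {1..N}"
  moreover from this have "other j = k" by (auto simp: other_def)
  ultimately show "0 \<le> p k i - alpha j * d j i" using assms by auto
qed

theorem lemma1:
  fixes N :: nat and h1 h2 s1 s2 :: real
    and alpha :: "nat \<Rightarrow> real" and E :: "nat \<Rightarrow> nat \<Rightarrow> real"
  assumes "h1 > 0" "h2 > 0" "s1 > 0" "s2 > 0"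
    and "\<forall>k\<in>{1,2}. 0 \<le> alpha k \<and> alpha k \<le> 1"
    and "\<forall>k\<in>{1,2}. \<forall>i\<in>{1..N}. E k i \<ge> 0"
  shows "\<exists>p d. optimal N h1 h2 s1 s2 alpha E p d \<and> procrastinating N alpha p d"
proof -
  obtain p d where opt: "optimal N h1 h2 s1 s2 alpha E p d"
    using optimal_policy_exists[OF assms] by blast
  then obtain d' where "feasible N alpha E p d'"
    and procr: "\<forall>j\<in>{1,2}. \<forall>i\<in>{1..N}. alpha j * d' j i \<le> p (other j) i \<and> (alpha j = 0 \<longrightarrow> d' j i = 0)"
    using procrastinating_transfers_exist[OF assms(5,6)] unfolding optimal_def by blast
  then have "optimal N h1 h2 s1 s2 alpha E p d'"
    using opt unfolding optimal_def by blast
  moreover have "procrastinating N alpha p d'"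
    using procr by (intro procrastinatingI) blast
  ultimately show ?thesis by blast
qed

end
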